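(* Assume the data (A1)–(A5): an associative unital $*$-algebra $\mathcal A$ over $\mathbb C$; an $\mathcal A$-bimodule $\Omega^1$; a $\mathbb C$-linear derivation $d:\mathcal A\to\Omega^1$; a map $\omega:\Omega^1\times\overline{\Omega^1}\to\mathbb C$, linear in both slots, with $\omega(\alpha,\overline\beta)=\overline{\omega(\beta,\overline\alpha)}$, $\omega(f\alpha g,\overline\beta)=\omega(\alpha,\overline{f^*\beta g^*})$ for $f,g\in\mathcal A$, $\omega(\alpha,\overline\alpha)>0$ for $\alpha\ne0$; and a linear $\eta:\mathcal A\to\mathbb C$ with $\eta(f^* )=-\overline{\eta(f)}$ and $\eta([f,g])=\frac{-1}{2\sqrt{-1}}\big(\omega(df,\overline{d(g^* )})-\omega(dg,\overline{d(f^* )})\big)$. Make $\overline{\Omega^1}$ an $\mathcal A$-bimodule by $f\cdot\overline\beta\cdot g:=\overline{g^*\beta f^*}$ and let $d^\dagger(f):=-\overline{d(f^* )}$. Let $\mathbb B:=\mathcal A\oplus\Omega^1\oplus\overline{\Omega^1}$ with bimodule structure $f\cdot(h,\alpha,\overline\beta)\cdot g:=(fhg,\ f\alpha g+df\,hg,\ f\overline\beta g+d^\dagger f\,hg)$. Write $f$ for $(f,0,0)$, $\alpha$ for $(0,\alpha,0)$, $\overline\alpha$ for $(0,0,\overline\alpha)$. Define a trilinear map $\Xi:\mathbb B\otimes_{\mathbb C}\mathbb B\otimes_{\mathbb C}\mathbb B\to\mathbb C$ by the following values on pure tensors, all other combinations of types (e.g. $\alpha\otimes\alpha'\otimes f$,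 $\overline\alpha\otimes\overline{\alpha'}\otimes f$, or three form-type factors) being sent to $0$: - $\Xi(f_1\otimes f_2\otimes f_3)=\sum_{(a,b,c)}\frac13\big(-2\sqrt{-1}\,\eta(f_af_bf_c)-\omega(df_a,d^\dagger f_b\cdot f_c)+\omega(df_b\cdot f_c,d^\dagger f_a)\big)$, summed over the cyclic permutations $(a,b,c)\in\{(1,2,3),(2,3,1),(3,1,2)\}$; - $\Xi(\alpha\otimes f\otimes g)=\Xi(g\otimes\alpha\otimes f)=\Xi(f\otimes g\otimes\alpha)=\omega(\alpha,d^\dagger f\cdot g)$; - $\Xi(\overline\alpha\otimes f\otimes g)=\Xi(g\otimes\overline\alpha\otimes f)=\Xi(f\otimes g\otimes\overline\alpha)=-\omega(df\cdot g,\overline\alpha)$; - $\Xi(\alpha\otimes\overline{\beta}\otimes f)=\Xi(f\otimes\alpha\otimes\overline\beta)=\Xi(\overline\beta\otimes f\otimes\alpha)=-\omega(\alpha,\overline\beta\cdot f)$; - $\Xi(\overline\beta\otimes\alpha\otimes f)=\Xi(f\otimes\overline\beta\otimes\alpha)=\Xi(\alpha\otimes f\otimes\overline\beta)=\omega(\alpha\cdot f,\overline\beta)$. Then $\Xi$ descends to a linear map $\Xi':\#(\mathbb B\otimes_{\mathcal A}\mathbb B\otimes_{\mathcal A}\mathbb B)\to\mathbb C$; equivalently, for all $a\in\mathcal A$ and $b_1,b_2,b_3\in\mathbb B$, $\Xi(b_1a\otimes b_2\otimes b_3)=\Xi(b_1\otimes ab_2\otimes b_3)$, $\Xi(b_1\otimes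 b_2a\otimes b_3)=\Xi(b_1\otimes b_2\otimes ab_3)$, and $\Xi(ab_1\otimes b_2\otimes b_3)=\Xi(b_1\otimes b_2\otimes b_3a)$.
   Context: $\overline{\Omega^1}$ is the complex-conjugate vector space of $\Omega^1$. For an $\mathcal A$-bimodule $G$, $\#(G):=G/\mathrm{span}\{ag-ga: a\in\mathcal A, g\in G\}$. The tensor product $\mathbb B\otimes_{\mathcal A}\mathbb B\otimes_{\mathcal A}\mathbb B$ is an $\mathcal A$-bimodule via the outer factors. *)

theory Defs
  imports Complex_Main
begin

text \<open>
The complex-conjugate space
of Omega^1 is represented by 'm itself: the element beta in the "bar" slot stands for
the conjugate vector bar(beta).  Hence the form omega : Omega^1 x bar(Omega^1) -> C is
encoded by om with  om alpha beta = omega(alpha, bar beta).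
\<close>

definition A1_A5 ::
  "(complex \<Rightarrow> 'a::ring_1 \<Rightarrow> 'a) \<Rightarrow> ('a \<Rightarrow> 'a) \<Rightarrow>
   (complex \<Rightarrow> 'm::ab_group_add \<Rightarrow> 'm) \<Rightarrow> ('a \<Rightarrow> 'm \<Rightarrow> 'm) \<Rightarrow> ('m \<Rightarrow> 'a \<Rightarrow> 'm) \<Rightarrow>
   ('a \<Rightarrow> 'm) \<Rightarrow> ('m \<Rightarrow> 'm \<Rightarrow> complex) \<Rightarrow> ('a \<Rightarrow> complex) \<Rightarrow> bool" where
  "A1_A5 sA st sM lM rM d om eta \<longleftrightarrow>
     \<comment> \<open>(A1) associative unital *-algebra over C\<close>
     vector_space sA \<and>
     (\<forall>c x y. sA c (x * y) = sA c x * y \<and> sA c (x * y) = x * sA c y) \<and>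
     (\<forall>x y. st (x + y) = st x + st y) \<and>
     (\<forall>c x. st (sA c x) = sA (cnj c) (st x)) \<and>
     (\<forall>x y. st (x * y) = st y * st x) \<and>
     (\<forall>x. st (st x) = x) \<and>
     \<comment> \<open>(A2) Omega^1 is an A-bimodule (over C)\<close>
     vector_space sM \<and>
     (\<forall>f g \<alpha>. lM (f + g) \<alpha> = lM f \<alpha> + lM g \<alpha>) \<and>
     (\<forall>f \<alpha> \<beta>. lM f (\<alpha> + \<beta>) = lM f \<alpha> + lM f \<beta>) \<and>
     (\<forall>f g \<alpha>. rM \<alpha> (f + g) = rM \<alpha> f + rM \<alpha> g) \<and>
     (\<forall>f \<alpha> \<beta>. rM (\<alpha> + \<beta>) f = rM \<alpha> f + rM \<beta> f) \<and>
     (\<forall>c f \<alpha>. lM (sA c f) \<alpha> = sM c (lM f \<alpha>) \<and> lM f (sM c \<alpha>) = sM c (lM f \<alpha>)) \<and>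
     (\<forall>c f \<alpha>. rM \<alpha> (sA c f) = sM c (rM \<alpha> f) \<and> rM (sM c \<alpha>) f = sM c (rM \<alpha> f)) \<and>
     (\<forall>f g \<alpha>. lM (f * g) \<alpha> = lM f (lM g \<alpha>)) \<and>
     (\<forall>f g \<alpha>. rM \<alpha> (f * g) = rM (rM \<alpha> f) g) \<and>
     (\<forall>f g \<alpha>. lM f (rM \<alpha> g) = rM (lM f \<alpha>) g) \<and>
     (\<forall>\<alpha>. lM 1 \<alpha> = \<alpha> \<and> rM \<alpha> 1 = \<alpha>) \<and>
     \<comment> \<open>(A3) C-linear derivation d\<close>
     (\<forall>x y. d (x + y) = d x + d y) \<and>
     (\<forall>c x. d (sA c x) = sM c (d x)) \<and>
     (\<forall>f g. d (f * g) = lM f (d g) + rM (d f) g) \<and>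
     \<comment> \<open>(A4) omega, linear in alpha and in bar beta\<close>
     (\<forall>\<alpha> \<alpha>' \<beta>. om (\<alpha> + \<alpha>') \<beta> = om \<alpha> \<beta> + om \<alpha>' \<beta>) \<and>
     (\<forall>c \<alpha> \<beta>. om (sM c \<alpha>) \<beta> = c * om \<alpha> \<beta>) \<and>
     (\<forall>\<alpha> \<beta> \<beta>'. om \<alpha> (\<beta> + \<beta>') = om \<alpha> \<beta> + om \<alpha> \<beta>') \<and>
     (\<forall>c \<alpha> \<beta>. om \<alpha> (sM (cnj c) \<beta>) = c * om \<alpha> \<beta>) \<and>
     (\<forall>\<alpha> \<beta>. om \<alpha> \<beta> = cnj (om \<beta> \<alpha>)) \<and>
     (\<forall>f g \<alpha> \<beta>. om (rM (lM f \<alpha>) g) \<beta> = om \<alpha> (rM (lM (st f) \<beta>) (st g))) \<and>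
     (\<forall>\<alpha>. \<alpha> \<noteq> 0 \<longrightarrow> om \<alpha> \<alpha> \<in> \<real> \<and> Re (om \<alpha> \<alpha>) > 0) \<and>
     \<comment> \<open>(A5) eta\<close>
     (\<forall>x y. eta (x + y) = eta x + eta y) \<and>
     (\<forall>c x. eta (sA c x) = c * eta x) \<and>
     (\<forall>f. eta (st f) = - cnj (eta f)) \<and>
     (\<forall>f g. eta (f * g - g * f) =
        (-1 / (2 * \<i>)) * (om (d f) (d (st g)) - om (d g) (d (st f))))"

text \<open>Bimodule structure on bar(Omega^1):  f . bar beta . g = bar (g^* beta f^*).
  On representatives: barL st rM f beta = rep of f . bar beta, barR st lM beta g = rep of bar beta . g.\<close>
definition barL :: "('a \<Rightarrow> 'a) \<Rightarrow> ('m \<Rightarrow> 'a \<Rightarrow> 'm) \<Rightarrow> 'a \<Rightarrow> 'm \<Rightarrow> 'm" where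
  "barL st rM f \<beta> = rM \<beta> (st f)"

definition barR :: "('a \<Rightarrow> 'a) \<Rightarrow> ('a \<Rightarrow> 'm \<Rightarrow> 'm) \<Rightarrow> 'm \<Rightarrow> 'a \<Rightarrow> 'm" where
  "barR st lM \<beta> g = lM (st g) \<beta>"

text \<open>d-dagger f = - bar(d(f^*)) = bar(- d(f^*)); representative:\<close>
definition ddag :: "('a \<Rightarrow> 'a) \<Rightarrow> ('a \<Rightarrow> 'm::ab_group_add) \<Rightarrow> 'a \<Rightarrow> 'm" where
  "ddag st d f = - d (st f)"

text \<open>B = A + Omega^1 + bar(Omega^1), element (h, alpha, beta) stands for (h, alpha, bar beta).\<close>
definition Bl :: "('a::ring_1 \<Rightarrow> 'a) \<Rightarrow> ('a \<Rightarrow> 'm::ab_group_add \<Rightarrow> 'm) \<Rightarrow> ('m \<Rightarrow> 'a \<Rightarrow> 'm) \<Rightarrow>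
    ('a \<Rightarrow> 'm) \<Rightarrow> 'a \<Rightarrow> 'a \<times> 'm \<times> 'm \<Rightarrow> 'a \<times> 'm \<times> 'm" where
  "Bl st lM rM d f b = (case b of (h, \<alpha>, \<beta>) \<Rightarrow>
     (f * h, lM f \<alpha> + rM (d f) h, barL st rM f \<beta> + barR st lM (ddag st d f) h))"

definition Br :: "('a::ring_1 \<Rightarrow> 'a) \<Rightarrow> ('a \<Rightarrow> 'm::ab_group_add \<Rightarrow> 'm) \<Rightarrow> ('m \<Rightarrow> 'a \<Rightarrow> 'm) \<Rightarrow>
    'a \<times> 'm \<times> 'm \<Rightarrow> 'a \<Rightarrow> 'a \<times> 'm \<times> 'm" where
  "Br st lM rM b g = (case b of (h, \<alpha>, \<beta>) \<Rightarrow> (h * g, rM \<alpha> g, barR st lM \<beta> g))"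

definition Xi0 :: "('a::ring_1 \<Rightarrow> 'a) \<Rightarrow> ('a \<Rightarrow> 'm::ab_group_add \<Rightarrow> 'm) \<Rightarrow> ('m \<Rightarrow> 'a \<Rightarrow> 'm) \<Rightarrow>
    ('a \<Rightarrow> 'm) \<Rightarrow> ('m \<Rightarrow> 'm \<Rightarrow> complex) \<Rightarrow> ('a \<Rightarrow> complex) \<Rightarrow> 'a \<Rightarrow> 'a \<Rightarrow> 'a \<Rightarrow> complex" where
  "Xi0 st lM rM d om eta f1 f2 f3 =
     (let T = (\<lambda>fa fb fc. (1/3) * (- 2 * \<i> * eta (fa * fb * fc)
                 - om (d fa) (barR st lM (ddag st d fb) fc)
                 + om (rM (d fb) fc) (ddag st d fa)))
      in T f1 f2 f3 + T f2 f3 f1 + T f3 f1 f2)"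

text \<open>The trilinear map Xi on B (x)_C B (x)_C B, written as the trilinear extension of its
  values on pure tensors of homogeneous type (the 27 type combinations; the vanishing ones omitted).\<close>
definition Xi :: "('a::ring_1 \<Rightarrow> 'a) \<Rightarrow> ('a \<Rightarrow> 'm::ab_group_add \<Rightarrow> 'm) \<Rightarrow> ('m \<Rightarrow> 'a \<Rightarrow> 'm) \<Rightarrow>
    ('a \<Rightarrow> 'm) \<Rightarrow> ('m \<Rightarrow> 'm \<Rightarrow> complex) \<Rightarrow> ('a \<Rightarrow> complex) \<Rightarrow>
    'a \<times> 'm \<times> 'm \<Rightarrow> 'a \<times> 'm \<times> 'm \<Rightarrow> 'a \<times> 'm \<times> 'm \<Rightarrow> complex" where
  "Xi st lM rM d om eta b1 b2 b3 =
     (case b1 of (h1, \<alpha>1, \<beta>1) \<Rightarrow> case b2 of (h2, \<alpha>2, \<beta>2) \<Rightarrow> case b3 of (h3, \<alpha>3, \<beta>3) \<Rightarrow>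
       Xi0 st lM rM d om eta h1 h2 h3
       \<comment> \<open>alpha (x) f (x) g,  g (x) alpha (x) f,  f (x) g (x) alpha  |->  omega(alpha, d^dagger f . g)\<close>
       + om \<alpha>1 (barR st lM (ddag st d h2) h3)
       + om \<alpha>2 (barR st lM (ddag st d h3) h1)
       + om \<alpha>3 (barR st lM (ddag st d h1) h2)
       \<comment> \<open>bar alpha (x) f (x) g, etc.  |->  - omega(df . g, bar alpha)\<close>
       - om (rM (d h2) h3) \<beta>1
       - om (rM (d h3) h1) \<beta>2
       - om (rM (d h1) h2) \<beta>3
       \<comment> \<open>alpha (x) bar beta (x) f, f (x) alpha (x) bar beta, bar beta (x) f (x) alpha |-> - omega(alpha, bar beta . f)\<close>
       - om \<alpha>1 (barR st lM \<beta>2 h3)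
       - om \<alpha>2 (barR st lM \<beta>3 h1)
       - om \<alpha>3 (barR st lM \<beta>1 h2)
       \<comment> \<open>bar beta (x) alpha (x) f, f (x) bar beta (x) alpha, alpha (x) f (x) bar beta |-> omega(alpha . f, bar beta)\<close>
       + om (rM \<alpha>2 h3) \<beta>1
       + om (rM \<alpha>3 h1) \<beta>2
       + om (rM \<alpha>1 h2) \<beta>3)"

end

theory Submission
  imports Defs
begin

(* Expanding the actions of B componentwise, with d a derivation and the form balanced for the
   bimodule actions, both sides of each identity agree term by term except for the eta-part of
   Xi0: moving a across a tensor sign rotates one of the three cyclic products, so that eta (x * a)
   appears on one side and eta (a * x) on the other.  The commutator condition on eta turns their
   difference into omega-terms, which cancel against the rest once d of every product has been
   expanded by the Leibniz rule. *)

(* The part of (A1)-(A5) the identities use: neither the scalar multiplications nor the hermitian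
   symmetry and positivity of omega play any role. *)
locale Xi_balance_data =
  fixes st :: "'a::ring_1 \<Rightarrow> 'a"
    and lM :: "'a \<Rightarrow> 'm::ab_group_add \<Rightarrow> 'm" and rM :: "'m \<Rightarrow> 'a \<Rightarrow> 'm"
    and d :: "'a \<Rightarrow> 'm" and om :: "'m \<Rightarrow> 'm \<Rightarrow> complex" and eta :: "'a \<Rightarrow> complex"
  assumes star_mult: "st (x * y) = st y * st x"
    and star_star: "st (st x) = x"
    and lM_add_right: "lM f (\<alpha> + \<beta>) = lM f \<alpha> + lM f \<beta>"
    and rM_add_left: "rM (\<alpha> + \<beta>) f = rM \<alpha> f + rM \<beta> f"
    and lM_mult: "lM (f * g) \<alpha> = lM f (lM g \<alpha>)"
    and rM_mult: "rM \<alpha> (f * g) = rM (rM \<alpha> f) g"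
    and lM_rM_commute: "lM f (rM \<alpha> g) = rM (lM f \<alpha>) g"
    and lM_one: "lM 1 \<alpha> = \<alpha>"
    and rM_one: "rM \<alpha> 1 = \<alpha>"
    and d_mult: "d (f * g) = lM f (d g) + rM (d f) g"
    and om_add_left: "om (\<alpha> + \<alpha>') \<beta> = om \<alpha> \<beta> + om \<alpha>' \<beta>"
    and om_add_right: "om \<alpha> (\<beta> + \<beta>') = om \<alpha> \<beta> + om \<alpha> \<beta>'"
    and om_bimodule: "om (rM (lM f \<alpha>) g) \<beta> = om \<alpha> (rM (lM (st f) \<beta>) (st g))"
    and eta_add: "eta (x + y) = eta x + eta y"
    and eta_commutator: "eta (f * g - g * f) =
          (-1 / (2 * \<i>)) * (om (d f) (d (st g)) - om (d g) (d (st f)))"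

lemma A1_A5_imp_Xi_balance_data:
  assumes "A1_A5 sA st sM lM rM d om eta"
  shows "Xi_balance_data st lM rM d om eta"
  using assms unfolding A1_A5_def Xi_balance_data_def by meson

context Xi_balance_data
begin

lemma star_one: "st 1 = 1"
  using star_mult[of "st 1" 1] star_star[of 1] by simp

lemma om_rM_left: "om (rM \<alpha> g) \<beta> = om \<alpha> (rM \<beta> (st g))"
  using om_bimodule[of 1] by (simp add: lM_one star_one)

lemma om_lM_left: "om (lM f \<alpha>) \<beta> = om \<alpha> (lM (st f) \<beta>)"
  using om_bimodule[of _ _ 1] by (simp add: rM_one star_one)

sublocale lM: additive "lM f"
  by unfold_locales (rule lM_add_right)

sublocale rM: additive "\<lambda>\<alpha>. rM \<alpha> f"
  by unfold_locales (rule rM_add_left)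

sublocale om: additive "om \<alpha>"
  by unfold_locales (rule om_add_right)

lemma eta_mult_commute:
  "eta (x * a) = eta (a * x) + (-1 / (2 * \<i>)) * (om (d x) (d (st a)) - om (d a) (d (st x)))"
  using eta_add[of "x * a - a * x" "a * x"] eta_commutator[of x a] by simp

lemmas bimodule_simps =
  star_mult star_star lM_add_right rM_add_left lM_mult rM_mult lM_rM_commute d_mult
  om_add_left om_add_right om_rM_left om_lM_left lM.minus rM.minus om.minus mult.assoc

lemma Xi_balanced_12:
  "Xi st lM rM d om eta (Br st lM rM b1 a) b2 b3 = Xi st lM rM d om eta b1 (Bl st lM rM d a b2) b3"
proof -
  obtain h1 \<alpha>1 \<beta>1 h2 \<alpha>2 \<beta>2 h3 \<alpha>3 \<beta>3
    where b: "b1 = (h1, \<alpha>1, \<beta>1)" "b2 = (h2, \<alpha>2, \<beta>2)" "b3 = (h3, \<alpha>3, \<beta>3)"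
    by (cases b1, cases b2, cases b3) auto
  show ?thesis
    unfolding b Xi_def Xi0_def Br_def Bl_def barL_def barR_def ddag_def Let_def
    by (simp only: bimodule_simps prod.case eta_mult_commute[of "h2 * h3 * h1" a, unfolded mult.assoc])
      (simp add: field_simps)
qed

lemma Xi_balanced_23:
  "Xi st lM rM d om eta b1 (Br st lM rM b2 a) b3 = Xi st lM rM d om eta b1 b2 (Bl st lM rM d a b3)"
proof -
  obtain h1 \<alpha>1 \<beta>1 h2 \<alpha>2 \<beta>2 h3 \<alpha>3 \<beta>3
    where b: "b1 = (h1, \<alpha>1, \<beta>1)" "b2 = (h2, \<alpha>2, \<beta>2)" "b3 = (h3, \<alpha>3, \<beta>3)"
    by (cases b1, cases b2, cases b3) auto
  show ?thesis
    unfolding b Xi_def Xi0_def Br_def Bl_def barL_def barR_def ddag_def Let_def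
    by (simp only: bimodule_simps prod.case eta_mult_commute[of "h3 * h1 * h2" a, unfolded mult.assoc])
      (simp add: field_simps)
qed

lemma Xi_balanced_31:
  "Xi st lM rM d om eta (Bl st lM rM d a b1) b2 b3 = Xi st lM rM d om eta b1 b2 (Br st lM rM b3 a)"
proof -
  obtain h1 \<alpha>1 \<beta>1 h2 \<alpha>2 \<beta>2 h3 \<alpha>3 \<beta>3
    where b: "b1 = (h1, \<alpha>1, \<beta>1)" "b2 = (h2, \<alpha>2, \<beta>2)" "b3 = (h3, \<alpha>3, \<beta>3)"
    by (cases b1, cases b2, cases b3) auto
  show ?thesis
    unfolding b Xi_def Xi0_def Br_def Bl_def barL_def barR_def ddag_def Let_def
    by (simp only: bimodule_simps prod.case eta_mult_commute[of "h1 * h2 * h3" a, unfolded mult.assoc])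
      (simp add: field_simps)
qed

end

theorem mainTheorem3:
  fixes sA :: "complex \<Rightarrow> 'a::ring_1 \<Rightarrow> 'a" and st :: "'a \<Rightarrow> 'a"
    and sM :: "complex \<Rightarrow> 'm::ab_group_add \<Rightarrow> 'm"
    and lM :: "'a \<Rightarrow> 'm \<Rightarrow> 'm" and rM :: "'m \<Rightarrow> 'a \<Rightarrow> 'm"
    and d :: "'a \<Rightarrow> 'm" and om :: "'m \<Rightarrow> 'm \<Rightarrow> complex" and eta :: "'a \<Rightarrow> complex"
  assumes "A1_A5 sA st sM lM rM d om eta"
  shows "\<forall>a b1 b2 b3.
     Xi st lM rM d om eta (Br st lM rM b1 a) b2 b3 = Xi st lM rM d om eta b1 (Bl st lM rM d a b2) b3 \<and>
     Xi st lM rM d om eta b1 (Br st lM rM b2 a) b3 = Xi st lM rM d om eta b1 b2 (Bl st lM rM d a b3) \<and>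
     Xi st lM rM d om eta (Bl st lM rM d a b1) b2 b3 = Xi st lM rM d om eta b1 b2 (Br st lM rM b3 a)"
proof -
  interpret Xi_balance_data st lM rM d om eta
    using assms by (rule A1_A5_imp_Xi_balance_data)
  show ?thesis
    using Xi_balanced_12 Xi_balanced_23 Xi_balanced_31 by blast
qed

end
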